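(* Let $p$ be a prime, $\alpha$ a positive integer, and $n,k,m$ nonnegative integers with $k\le n$. Suppose that $u_1,\dots,u_{n-k}\in\mathbb{Z}^n$ and $v_1,\dots,v_m\in\mathbb{Z}^n$ satisfy \begin{align*} u_i\cdot u_i&\not\equiv 0\pmod{p^\alpha}\ \text{for all } i,\\ u_i\cdot u_j&\equiv 0\pmod{p^\alpha}\ \text{for all } i\neq j,\\ v_i\cdot v_j&\equiv 0\pmod{p^\alpha}\ \text{for all } i,j,\\ u_i\cdot v_j&\equiv 0\pmod{p^\alpha}\ \text{for all } i,j. \end{align*} Then the subspace of $\mathbb{F}_p^n$ spanned by $v_1\bmod p,\dots,v_m\bmod p$ has dimension at most $k/2$.
   Context: Here $x\cdot y=\sum_t x^{(t)}y^{(t)}$ denotes the standard integer dot product on $\mathbb{Z}^n$, and $v\bmod p$ denotes the coordinatewise reduction into $\mathbb{F}_p^n$. *)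

theory Defs
  imports Main "HOL-Library.Function_Algebras" "Berlekamp_Zassenhaus.Finite_Field"
begin

text \<open>Vectors of Z^n are represented as functions nat => int, only coordinates t < n matter.\<close>

definition idot :: "nat \<Rightarrow> (nat \<Rightarrow> int) \<Rightarrow> (nat \<Rightarrow> int) \<Rightarrow> int" where
  "idot n x y = (\<Sum>t<n. x t * y t)"

text \<open>Coordinatewise reduction into F_p^n, where F_p is the type 'p mod_ring with CARD('p) = p;
  coordinates t >= n are set to 0 so the result lives in a copy of F_p^n.\<close>

definition red_mod :: "nat \<Rightarrow> (nat \<Rightarrow> int) \<Rightarrow> (nat \<Rightarrow> 'p::prime_card mod_ring)" where
  "red_mod n v = (\<lambda>t. if t < n then of_int (v t) else 0)"

definition fscale :: "'a::field \<Rightarrow> (nat \<Rightarrow> 'a) \<Rightarrow> (nat \<Rightarrow> 'a)" where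
  "fscale c x = (\<lambda>t. c * x t)"

end

theory Submission
  imports Defs
begin

text \<open>
  Choose indices whose reductions \<open>v\<^sub>j mod p\<close> form a basis \<open>b\<^sub>1, \<dots>, b\<^sub>d\<close> of the
  span, and integer lifts \<open>z\<^sub>l\<close> of a dual system, so that \<open>v\<^sub>j \<cdot> z\<^sub>l \<equiv> \<delta>\<^sub>j\<^sub>l (mod p)\<close>.
  The \<open>n - k + 2d\<close> integer vectors \<open>u\<^sub>i, v\<^sub>j, z\<^sub>l\<close> are then linearly independent
  over \<open>\<int>\<close>, so \<open>n - k + 2d \<le> n\<close>.  By descent it suffices that every integer relation
  \<open>\<Sum> a\<^sub>i u\<^sub>i + \<Sum> b\<^sub>j v\<^sub>j + \<Sum> c\<^sub>l z\<^sub>l = 0\<close> has all coefficients divisible by \<open>p\<close>.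
  Dotting with \<open>v\<^sub>m\<close> kills the \<open>u\<close>- and \<open>v\<close>-terms modulo \<open>p\<^sup>\<alpha>\<close>, and the matrix
  \<open>(z\<^sub>l \<cdot> v\<^sub>m)\<close>, being congruent to the identity modulo \<open>p\<close>, is invertible modulo
  \<open>p\<^sup>\<alpha>\<close>; hence \<open>p\<^sup>\<alpha> | c\<^sub>l\<close>.  Dotting with \<open>u\<^sub>m\<close> then leaves
  \<open>a\<^sub>m (u\<^sub>m \<cdot> u\<^sub>m) \<equiv> 0 (mod p\<^sup>\<alpha>)\<close>, which forces \<open>p | a\<^sub>m\<close>, and dotting with
  \<open>z\<^sub>m\<close> gives \<open>p | b\<^sub>m\<close>.
\<close>

definition int_independent :: "nat \<Rightarrow> ('i \<Rightarrow> nat \<Rightarrow> int) \<Rightarrow> 'i set \<Rightarrow> bool" where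
  "int_independent n w I \<longleftrightarrow>
     (\<forall>a. (\<forall>t<n. (\<Sum>i\<in>I. a i * w i t) = 0) \<longrightarrow> (\<forall>i\<in>I. a i = 0))"

lemma nontrivial_int_relation_if_card_gt:
  fixes w :: "'i \<Rightarrow> nat \<Rightarrow> int"
  assumes "finite I" "n < card I"
  shows "\<exists>a. (\<exists>i\<in>I. a i \<noteq> 0) \<and> (\<forall>t<n. (\<Sum>i\<in>I. a i * w i t) = 0)"
  using assms
proof (induction n arbitrary: I w)
  case 0
  then obtain i where "i \<in> I" by fastforce
  then show ?case by (intro exI[of _ "\<lambda>_. 1"]) auto
next
  case (Suc n)
  show ?case
  proof (cases "\<forall>i\<in>I. w i n = 0")
    case True
    obtain a where a: "\<exists>i\<in>I. a i \<noteq> 0" "\<forall>t<n. (\<Sum>i\<in>I. a i * w i t) = 0"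
      using Suc.IH[of I w] Suc.prems by auto
    have "(\<Sum>i\<in>I. a i * w i t) = 0" if "t < Suc n" for t
      using that a(2) True by (cases "t = n") auto
    with a(1) show ?thesis by blast
  next
    case False
    then obtain i0 where i0: "i0 \<in> I" "w i0 n \<noteq> 0" by auto
    define J where "J = I - {i0}"
    \<comment> \<open>Gaussian elimination of coordinate \<open>n\<close> with pivot \<open>w i0 n\<close>.\<close>
    define w' where "w' i t = w i0 n * w i t - w i n * w i0 t" for i t
    have "finite J" "n < card J" using Suc.prems i0 J_def by auto
    then obtain a' where a': "\<exists>i\<in>J. a' i \<noteq> 0" "\<forall>t<n. (\<Sum>i\<in>J. a' i * w' i t) = 0"
      using Suc.IH by blast
    define a where "a i = (if i = i0 then - (\<Sum>j\<in>J. a' j * w j n) else a' i * w i0 n)" for i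
    have eliminated: "(\<Sum>i\<in>I. a i * w i t) = (\<Sum>j\<in>J. a' j * w' j t)" for t
    proof -
      have "(\<Sum>i\<in>I. a i * w i t) = a i0 * w i0 t + (\<Sum>j\<in>J. a j * w j t)"
        unfolding J_def using i0 Suc.prems(1) by (subst sum.remove[of _ i0]) auto
      also have "(\<Sum>j\<in>J. a j * w j t) = (\<Sum>j\<in>J. a' j * w i0 n * w j t)"
        by (rule sum.cong) (auto simp: a_def J_def)
      also have "a i0 * w i0 t = - (\<Sum>j\<in>J. a' j * w j n * w i0 t)"
        by (simp add: a_def sum_distrib_right)
      finally show ?thesis
        by (simp add: w'_def sum_subtractf algebra_simps)
    qed
    obtain j where "j \<in> J" "a' j \<noteq> 0" using a'(1) by blast
    then have "\<exists>i\<in>I. a i \<noteq> 0" using i0 unfolding a_def J_def by auto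
    moreover have "(\<Sum>i\<in>I. a i * w i t) = 0" if "t < Suc n" for t
    proof (cases "t = n")
      case True
      then show ?thesis unfolding eliminated by (simp add: w'_def mult.commute)
    next
      case False
      then show ?thesis using that a'(2) eliminated by simp
    qed
    ultimately show ?thesis by blast
  qed
qed

lemma card_le_if_int_independent:
  assumes "finite I" "int_independent n w I"
  shows "card I \<le> n"
  using nontrivial_int_relation_if_card_gt[OF assms(1), of n w] assms(2)
  unfolding int_independent_def by (meson not_le)

lemma int_independentI_descent:
  fixes q :: int
  assumes "q \<noteq> 0" "\<not> is_unit q"
    and divisible: "\<And>a. \<forall>t<n. (\<Sum>i\<in>I. a i * w i t) = 0 \<Longrightarrow> \<forall>i\<in>I. q dvd a i"
  shows "int_independent n w I"
proof -
  have powers: "\<forall>i\<in>I. q ^ s dvd a i" if "\<forall>t<n. (\<Sum>i\<in>I. a i * w i t) = 0" for s a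
    using that
  proof (induction s arbitrary: a)
    case 0
    then show ?case by simp
  next
    case (Suc s)
    define a' where "a' i = a i div q" for i
    have a: "a i = q * a' i" if "i \<in> I" for i
      using divisible[OF Suc.prems] that by (simp add: a'_def)
    have "(\<Sum>i\<in>I. a i * w i t) = q * (\<Sum>i\<in>I. a' i * w i t)" for t
      by (simp add: sum_distrib_left a mult.assoc)
    with Suc.prems \<open>q \<noteq> 0\<close> have "\<forall>t<n. (\<Sum>i\<in>I. a' i * w i t) = 0"
      by simp
    then show ?case using Suc.IH a by auto
  qed
  show ?thesis
    unfolding int_independent_def
  proof (intro allI impI ballI)
    fix a i
    assume "\<forall>t<n. (\<Sum>i\<in>I. a i * w i t) = 0" and "i \<in> I"
    with powers have "{s. q ^ s dvd a i} = UNIV" by blast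
    then show "a i = 0"
      using finite_divisor_powers[of "a i" q] \<open>\<not> is_unit q\<close> by auto
  qed
qed

lemma idot_commute: "idot n x y = idot n y x"
  unfolding idot_def by (simp add: mult.commute)

lemma idot_sum_left: "idot n (\<lambda>t. \<Sum>i\<in>I. a i * w i t) y = (\<Sum>i\<in>I. a i * idot n (w i) y)"
proof -
  have "idot n (\<lambda>t. \<Sum>i\<in>I. a i * w i t) y = (\<Sum>t<n. \<Sum>i\<in>I. a i * (w i t * y t))"
    unfolding idot_def by (simp add: sum_distrib_right mult.assoc)
  also have "\<dots> = (\<Sum>i\<in>I. a i * idot n (w i) y)"
    unfolding idot_def by (subst sum.swap) (simp add: sum_distrib_left)
  finally show ?thesis .
qed

lemma idot_eq_0_if_left_zero: "(\<And>t. t < n \<Longrightarrow> x t = 0) \<Longrightarrow> idot n x y = 0"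
  unfolding idot_def by simp

lemma dvd_sum_delta_diff:
  fixes q :: int
  assumes "finite J" "m \<in> J" "\<And>l. l \<in> J \<Longrightarrow> q dvd P l - (if l = m then 1 else 0)"
  shows "q dvd (\<Sum>l\<in>J. c l * P l) - c m"
proof -
  have "(\<Sum>l\<in>J. c l * (if l = m then 1 else 0)) = c m"
    using assms(1,2) by (simp add: if_distrib cong: if_cong)
  then have "(\<Sum>l\<in>J. c l * P l) - c m = (\<Sum>l\<in>J. c l * (P l - (if l = m then 1 else 0)))"
    by (simp add: right_diff_distrib sum_subtractf)
  also have "q dvd \<dots>" using assms(3) by (intro dvd_sum) auto
  finally show ?thesis .
qed

lemma pow_dvd_if_cong_identity:
  fixes q :: int
  assumes "q \<noteq> 0" "finite J"
    and P: "\<And>l m. l \<in> J \<Longrightarrow> m \<in> J \<Longrightarrow> q dvd P l m - (if l = m then 1 else 0)"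
    and "\<And>m. m \<in> J \<Longrightarrow> q ^ k dvd (\<Sum>l\<in>J. c l * P l m)" and "l \<in> J"
  shows "q ^ k dvd c l"
  using assms(4,5)
proof (induction k arbitrary: c l)
  case 0
  then show ?case by simp
next
  case (Suc k)
  have "q dvd c m" if "m \<in> J" for m
  proof -
    have "q dvd (\<Sum>l\<in>J. c l * P l m)"
      using Suc.prems(1)[OF that] by (simp add: dvd_mult_left)
    moreover have "q dvd (\<Sum>l\<in>J. c l * P l m) - c m"
      using dvd_sum_delta_diff[OF assms(2) that, where P="\<lambda>l. P l m"] P that by blast
    ultimately have "q dvd (\<Sum>l\<in>J. c l * P l m) - ((\<Sum>l\<in>J. c l * P l m) - c m)"
      by (rule dvd_diff)
    then show ?thesis by simp
  qed
  define c' where "c' l = c l div q" for l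
  have c: "c l = q * c' l" if "l \<in> J" for l
    using \<open>\<And>m. m \<in> J \<Longrightarrow> q dvd c m\<close>[OF that] by (simp add: c'_def)
  have "(\<Sum>l\<in>J. c l * P l m) = q * (\<Sum>l\<in>J. c' l * P l m)" for m
    by (simp add: sum_distrib_left c mult.assoc)
  then have "q ^ k dvd (\<Sum>l\<in>J. c' l * P l m)" if "m \<in> J" for m
    using Suc.prems(1)[OF that] \<open>q \<noteq> 0\<close> by simp
  then show ?case using Suc.IH Suc.prems(2) c by simp
qed

lemma relation_coeffs_dvd_prime:
  fixes q :: int and u :: "'i \<Rightarrow> nat \<Rightarrow> int" and V Z :: "'j \<Rightarrow> nat \<Rightarrow> int"
  assumes "prime q" "\<alpha> > 0" "finite I" "finite J"
    and uu: "\<And>i. i \<in> I \<Longrightarrow> \<not> q ^ \<alpha> dvd idot n (u i) (u i)"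
    and uu': "\<And>i j. i \<in> I \<Longrightarrow> j \<in> I \<Longrightarrow> i \<noteq> j \<Longrightarrow> q ^ \<alpha> dvd idot n (u i) (u j)"
    and VV: "\<And>i j. i \<in> J \<Longrightarrow> j \<in> J \<Longrightarrow> q ^ \<alpha> dvd idot n (V i) (V j)"
    and uV: "\<And>i j. i \<in> I \<Longrightarrow> j \<in> J \<Longrightarrow> q ^ \<alpha> dvd idot n (u i) (V j)"
    and VZ: "\<And>j l. j \<in> J \<Longrightarrow> l \<in> J \<Longrightarrow> q dvd idot n (V j) (Z l) - (if j = l then 1 else 0)"
    and rel: "\<And>y. (\<Sum>i\<in>I. a i * idot n (u i) y) + (\<Sum>j\<in>J. b j * idot n (V j) y)
                   + (\<Sum>l\<in>J. c l * idot n (Z l) y) = 0"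
  shows "(\<forall>i\<in>I. q dvd a i) \<and> (\<forall>j\<in>J. q dvd b j) \<and> (\<forall>l\<in>J. q dvd c l)"
proof -
  have "q ^ \<alpha> dvd c l" if "l \<in> J" for l
  proof (rule pow_dvd_if_cong_identity[of q J "\<lambda>l m. idot n (Z l) (V m)"])
    show "q \<noteq> 0" using \<open>prime q\<close> by auto
    show "q dvd idot n (Z l) (V m) - (if l = m then 1 else 0)" if "l \<in> J" "m \<in> J" for l m
      using VZ[OF that(2,1)] by (simp add: idot_commute eq_commute)
    show "q ^ \<alpha> dvd (\<Sum>l\<in>J. c l * idot n (Z l) (V m))" if "m \<in> J" for m
    proof -
      have "q ^ \<alpha> dvd (\<Sum>i\<in>I. a i * idot n (u i) (V m)) + (\<Sum>j\<in>J. b j * idot n (V j) (V m))"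
        using uV VV that by (intro dvd_add dvd_sum) auto
      moreover have "(\<Sum>l\<in>J. c l * idot n (Z l) (V m)) =
          - ((\<Sum>i\<in>I. a i * idot n (u i) (V m)) + (\<Sum>j\<in>J. b j * idot n (V j) (V m)))"
        using rel[of "V m"] by linarith
      ultimately show ?thesis by (simp only: dvd_minus_iff)
    qed
  qed (use that \<open>finite J\<close> in auto)
  then have c: "q dvd c l" if "l \<in> J" for l
    using that \<open>\<alpha> > 0\<close> by (meson dvd_power dvd_trans)
  have "q dvd a m" if "m \<in> I" for m
  proof (rule ccontr)
    assume "\<not> q dvd a m"
    have others: "q ^ \<alpha> dvd (\<Sum>i\<in>I - {m}. a i * idot n (u i) (u m))
        + (\<Sum>j\<in>J. b j * idot n (V j) (u m)) + (\<Sum>l\<in>J. c l * idot n (Z l) (u m))"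
      using uu' uV \<open>\<And>l. l \<in> J \<Longrightarrow> q ^ \<alpha> dvd c l\<close> that
      by (intro dvd_add dvd_sum) (auto simp: idot_commute)
    have "(\<Sum>i\<in>I. a i * idot n (u i) (u m)) =
        a m * idot n (u m) (u m) + (\<Sum>i\<in>I - {m}. a i * idot n (u i) (u m))"
      using that \<open>finite I\<close> by (simp add: sum.remove)
    then have "a m * idot n (u m) (u m) = - ((\<Sum>i\<in>I - {m}. a i * idot n (u i) (u m))
        + (\<Sum>j\<in>J. b j * idot n (V j) (u m)) + (\<Sum>l\<in>J. c l * idot n (Z l) (u m)))"
      using rel[of "u m"] by linarith
    with others have "q ^ \<alpha> dvd a m * idot n (u m) (u m)"
      by (simp only: dvd_minus_iff)
    moreover have "coprime (q ^ \<alpha>) (a m)"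
      using \<open>prime q\<close> \<open>\<not> q dvd a m\<close> by (simp add: prime_imp_coprime)
    ultimately show False
      using uu[OF that] by (simp add: coprime_dvd_mult_right_iff)
  qed
  moreover have "q dvd b m" if "m \<in> J" for m
  proof -
    have "q dvd (\<Sum>i\<in>I. a i * idot n (u i) (Z m)) + (\<Sum>l\<in>J. c l * idot n (Z l) (Z m))"
      using \<open>\<And>m. m \<in> I \<Longrightarrow> q dvd a m\<close> c by (intro dvd_add dvd_sum) auto
    moreover have "(\<Sum>j\<in>J. b j * idot n (V j) (Z m)) =
        - ((\<Sum>i\<in>I. a i * idot n (u i) (Z m)) + (\<Sum>l\<in>J. c l * idot n (Z l) (Z m)))"
      using rel[of "Z m"] by linarith
    ultimately have "q dvd (\<Sum>j\<in>J. b j * idot n (V j) (Z m))" by (simp only: dvd_minus_iff)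
    moreover have "q dvd (\<Sum>j\<in>J. b j * idot n (V j) (Z m)) - b m"
      using dvd_sum_delta_diff[OF \<open>finite J\<close> that, where P="\<lambda>j. idot n (V j) (Z m)"] VZ that
      by blast
    ultimately have "q dvd (\<Sum>j\<in>J. b j * idot n (V j) (Z m)) - ((\<Sum>j\<in>J. b j * idot n (V j) (Z m)) - b m)"
      by (rule dvd_diff)
    then show ?thesis by simp
  qed
  ultimately show ?thesis using c by blast
qed

(* Sum_Type.Plus is spelled out because <+> also denotes set addition of HOL-Algebra,
   which is in scope through Defs. *)
lemma int_independent_Plus:
  fixes q :: int and u :: "'i \<Rightarrow> nat \<Rightarrow> int" and V Z :: "'j \<Rightarrow> nat \<Rightarrow> int"
  assumes "prime q" "\<alpha> > 0" "finite I" "finite J"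
    and "\<And>i. i \<in> I \<Longrightarrow> \<not> q ^ \<alpha> dvd idot n (u i) (u i)"
    and "\<And>i j. i \<in> I \<Longrightarrow> j \<in> I \<Longrightarrow> i \<noteq> j \<Longrightarrow> q ^ \<alpha> dvd idot n (u i) (u j)"
    and "\<And>i j. i \<in> J \<Longrightarrow> j \<in> J \<Longrightarrow> q ^ \<alpha> dvd idot n (V i) (V j)"
    and "\<And>i j. i \<in> I \<Longrightarrow> j \<in> J \<Longrightarrow> q ^ \<alpha> dvd idot n (u i) (V j)"
    and "\<And>j l. j \<in> J \<Longrightarrow> l \<in> J \<Longrightarrow> q dvd idot n (V j) (Z l) - (if j = l then 1 else 0)"
  shows "int_independent n (case_sum (case_sum u V) Z) (Sum_Type.Plus (Sum_Type.Plus I J) J)"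
proof (rule int_independentI_descent)
  show "q \<noteq> 0" "\<not> is_unit q" using \<open>prime q\<close> by (auto simp: not_prime_unit)
next
  fix a
  let ?w = "case_sum (case_sum u V) Z" and ?K = "Sum_Type.Plus (Sum_Type.Plus I J) J"
  assume "\<forall>t<n. (\<Sum>x\<in>?K. a x * ?w x t) = 0"
  then have "(\<Sum>x\<in>?K. a x * idot n (?w x) y) = 0" for y
    by (simp add: idot_sum_left[symmetric] idot_eq_0_if_left_zero)
  then have "(\<Sum>i\<in>I. a (Inl (Inl i)) * idot n (u i) y) + (\<Sum>j\<in>J. a (Inl (Inr j)) * idot n (V j) y)
      + (\<Sum>l\<in>J. a (Inr l) * idot n (Z l) y) = 0" for y
    using \<open>finite I\<close> \<open>finite J\<close> by (simp add: sum.Plus)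
  from relation_coeffs_dvd_prime[OF assms this]
  show "\<forall>x\<in>?K. q dvd a x" by auto
qed

interpretation fs: vector_space "fscale :: 'a::field \<Rightarrow> (nat \<Rightarrow> 'a) \<Rightarrow> _"
  by unfold_locales (auto simp: fscale_def algebra_simps)

interpretation fs_functional: vector_space_pair "fscale :: 'a::field \<Rightarrow> (nat \<Rightarrow> 'a) \<Rightarrow> _" "(*)"
  by unfold_locales (auto simp: fscale_def algebra_simps)

lemma sum_fun_apply: "(sum f A) t = (\<Sum>a\<in>A. f a t)"
  by (induction A rule: infinite_finite_induct) auto

lemma exists_dual_vector:
  fixes B :: "(nat \<Rightarrow> 'a::field) set"
  assumes "fs.independent B" and "\<forall>x\<in>B. \<forall>t\<ge>n. x t = 0"
  shows "\<exists>\<zeta>. \<forall>x\<in>B. (\<Sum>t<n. x t * \<zeta> t) = (if x = b then 1 else 0)"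
proof -
  obtain g where lin: "Vector_Spaces.linear fscale (*) g"
    and g: "\<forall>x\<in>B. g x = (if x = b then 1 else 0)"
    using fs_functional.linear_independent_extend[OF assms(1), where f="\<lambda>x. if x = b then 1 else 0"] by blast
  interpret g: Vector_Spaces.linear fscale "(*)" g by (rule lin)
  define e where "e t = (\<lambda>s. if s = t then 1 else 0 :: 'a)" for t :: nat
  have "g x = (\<Sum>t<n. x t * g (e t))" if "x \<in> B" for x
  proof -
    have "x s = (\<Sum>t<n. fscale (x t) (e t)) s" for s
    proof -
      have "(\<Sum>t<n. fscale (x t) (e t)) s = (\<Sum>t<n. if t = s then x s else 0)"
        unfolding sum_fun_apply by (rule sum.cong) (auto simp: fscale_def e_def)
      also have "\<dots> = x s" using assms(2) that by auto
      finally show ?thesis ..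
    qed
    then have "x = (\<Sum>t<n. fscale (x t) (e t))" by (rule ext)
    then have "g x = g (\<Sum>t<n. fscale (x t) (e t))" by (rule arg_cong)
    also have "\<dots> = (\<Sum>t<n. x t * g (e t))" by (simp add: g.sum g.scale)
    finally show ?thesis .
  qed
  with g have "\<forall>x\<in>B. (\<Sum>t<n. x t * g (e t)) = (if x = b then 1 else 0)" by simp
  then show ?thesis by (rule exI[of _ "\<lambda>t. g (e t)"])
qed

lemma dvd_iff_of_int_mod_ring_eq_0:
  assumes "CARD('p::prime_card) = p"
  shows "int p dvd x \<longleftrightarrow> (of_int x :: 'p mod_ring) = 0"
  by (simp add: of_int_eq_0_iff_char_dvd assms)

lemma of_int_idot_to_int_mod_ring:
  "(of_int (idot n x (\<lambda>t. to_int_mod_ring (z t))) :: 'p::prime_card mod_ring) = (\<Sum>t<n. red_mod n x t * z t)"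
proof -
  have "of_int (to_int_mod_ring c) = c" for c :: "'p mod_ring"
    by (simp add: of_int_of_int_mod_ring)
  then show ?thesis by (simp add: idot_def red_mod_def)
qed

lemma exists_int_dual_lifts:
  fixes B :: "(nat \<Rightarrow> 'p::prime_card mod_ring) set"
  assumes "CARD('p) = p" "fs.independent B" "B \<subseteq> range (red_mod n)"
  shows "\<exists>Z. \<forall>x. \<forall>b\<in>B. red_mod n x \<in> B \<longrightarrow>
           int p dvd idot n x (Z b) - (if red_mod n x = b then 1 else 0)"
proof -
  have "\<forall>x\<in>B. \<forall>t\<ge>n. x t = 0" using assms(3) by (auto simp: red_mod_def)
  then have "\<forall>b\<in>B. \<exists>\<zeta>. \<forall>x\<in>B. (\<Sum>t<n. x t * \<zeta> t) = (if x = b then 1 else 0)"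
    using exists_dual_vector[OF assms(2)] by blast
  then obtain \<zeta> where \<zeta>: "\<forall>b\<in>B. \<forall>x\<in>B. (\<Sum>t<n. x t * \<zeta> b t) = (if x = b then 1 else 0)"
    by (auto dest!: bchoice)
  show ?thesis
  proof (intro exI[of _ "\<lambda>b t. to_int_mod_ring (\<zeta> b t)"] allI ballI impI)
    fix x b
    assume "b \<in> B" "red_mod n x \<in> B"
    then have "(of_int (idot n x (\<lambda>t. to_int_mod_ring (\<zeta> b t))) :: 'p mod_ring) =
        (if red_mod n x = b then 1 else 0)"
      using \<zeta> by (simp add: of_int_idot_to_int_mod_ring)
    then show "int p dvd idot n x (\<lambda>t. to_int_mod_ring (\<zeta> b t)) - (if red_mod n x = b then 1 else 0)"
      unfolding dvd_iff_of_int_mod_ring_eq_0[OF assms(1)] by simp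
  qed
qed

theorem lemma2p1:
  fixes p :: nat and \<alpha> n k m :: nat
    and u v :: "nat \<Rightarrow> nat \<Rightarrow> int"
  assumes "prime p" and "CARD('p::prime_card) = p"
    and "\<alpha> > 0" and "k \<le> n"
    and "\<And>i. i < n - k \<Longrightarrow> \<not> (int p ^ \<alpha> dvd idot n (u i) (u i))"
    and "\<And>i j. i < n - k \<Longrightarrow> j < n - k \<Longrightarrow> i \<noteq> j \<Longrightarrow> int p ^ \<alpha> dvd idot n (u i) (u j)"
    and "\<And>i j. i < m \<Longrightarrow> j < m \<Longrightarrow> int p ^ \<alpha> dvd idot n (v i) (v j)"
    and "\<And>i j. i < n - k \<Longrightarrow> j < m \<Longrightarrow> int p ^ \<alpha> dvd idot n (u i) (v j)"
  shows "2 * vector_space.dim (fscale :: 'p mod_ring \<Rightarrow> _)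
           ((\<lambda>j. red_mod n (v j) :: nat \<Rightarrow> 'p mod_ring) ` {..<m}) \<le> k"
proof -
  define G where "G = (\<lambda>j. red_mod n (v j) :: nat \<Rightarrow> 'p mod_ring) ` {..<m}"
  obtain B where B: "B \<subseteq> G" "fs.independent B" "G \<subseteq> fs.span B"
    using fs.maximal_independent_subset by blast
  have "finite B" using B(1) finite_subset unfolding G_def by blast
  have "\<forall>b\<in>B. \<exists>j. j < m \<and> red_mod n (v j) = b" using B(1) unfolding G_def by auto
  then obtain \<sigma> where \<sigma>: "\<forall>b\<in>B. \<sigma> b < m \<and> red_mod n (v (\<sigma> b)) = b" by (auto dest!: bchoice)
  have "B \<subseteq> range (red_mod n)" using B(1) unfolding G_def by auto
  then obtain Z where Z: "\<forall>x. \<forall>b\<in>B. red_mod n x \<in> B \<longrightarrow>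
      int p dvd idot n x (Z b) - (if red_mod n x = b then 1 else 0)"
    using exists_int_dual_lifts[OF assms(2) B(2)] by blast
  define V where "V b = v (\<sigma> b)" for b
  have "int p dvd idot n (V b) (Z b') - (if b = b' then 1 else 0)" if "b \<in> B" "b' \<in> B" for b b'
    using Z[rule_format, where x = "v (\<sigma> b)" and b = b'] \<sigma> that unfolding V_def by simp
  with assms(5-8) \<sigma> have "int_independent n (case_sum (case_sum u V) Z)
      (Sum_Type.Plus (Sum_Type.Plus {..<n - k} B) B)"
    by (intro int_independent_Plus[where q = "int p" and \<alpha> = \<alpha>])
      (simp_all add: \<open>prime p\<close> \<open>\<alpha> > 0\<close> \<open>finite B\<close> V_def)
  then have "card (Sum_Type.Plus (Sum_Type.Plus {..<n - k} B) B) \<le> n"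
    by (rule card_le_if_int_independent[rotated]) (simp add: \<open>finite B\<close>)
  then have "n - k + card B + card B \<le> n"
    using \<open>finite B\<close> by (simp add: card_Plus)
  moreover have "card B = fs.dim G" by (rule fs.basis_card_eq_dim[OF B(1,3,2)])
  ultimately show ?thesis using \<open>k \<le> n\<close> unfolding G_def by simp
qed

end
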